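(* The sequence $(C_n)_{n\ge1}$ is strictly increasing.
   Context: For $n\ge1$ and $\mathbf{x}=(x_1,\dots,x_n)\in(0,\infty)^n$ let $f_n(\mathbf{x})=\sum_{i=1}^n x_i+\sum_{1\le i\le j\le n}\prod_{k=i}^j \frac1{x_k}$, $A_n=\inf_{\mathbf{x}\in(0,\infty)^n} f_n(\mathbf{x})$, and $C_n=3n-A_n$. *)

theory Defs
  imports Complex_Main
begin

definition f_fun :: "nat \<Rightarrow> (nat \<Rightarrow> real) \<Rightarrow> real" where
  "f_fun n x = (\<Sum>i=1..n. x i) + (\<Sum>j=1..n. \<Sum>i=1..j. \<Prod>k=i..j. 1 / x k)"

definition A_val :: "nat \<Rightarrow> real" where
  "A_val n = (INF x \<in> {x :: nat \<Rightarrow> real. \<forall>k\<in>{1..n}. 0 < x k}. f_fun n x)"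

definition C_val :: "nat \<Rightarrow> real" where
  "C_val n = 3 * real n - A_val n"

end

theory Submission
  imports Defs "HOL-Analysis.Analysis"
begin

text \<open>In the variables \<open>b\<^sub>j = \<Sum>\<^sub>i\<^sub>\<le>\<^sub>j \<Prod>\<^sub>k\<^sub>=\<^sub>i\<^sup>j 1/x\<^sub>k\<close>, which satisfy
  \<open>b\<^sub>0 = 0\<close> and \<open>x\<^sub>j = (1 + b\<^sub>j\<^sub>-\<^sub>1) / b\<^sub>j\<close>, \<open>f\<^sub>n\<close> becomes
  \<open>F\<^sub>n(b) = \<Sum>\<^sub>j (b\<^sub>j + (1 + b\<^sub>j\<^sub>-\<^sub>1) / b\<^sub>j)\<close>. Since \<open>F\<^sub>n\<close> dominates every \<open>b\<^sub>j\<close> and every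
  \<open>1/b\<^sub>j\<close>, its sublevel sets are compact and \<open>A\<^sub>n\<close> is attained at some \<open>b\<close>.
  Take the first \<open>k\<close> with \<open>b\<^sub>k \<ge> 1\<close> (or \<open>k = n + 1\<close> if there is none), so that
  \<open>u = b\<^sub>k\<^sub>-\<^sub>1 < 1\<close>, and insert the new value \<open>s = (3 + u)/4\<close> at position \<open>k\<close>.
  This raises \<open>F\<close> by at most \<open>s + (1 + u)/s + (s - u) = 3 - (1 - u)\<^sup>2 / (2(3 + u)) < 3\<close>,
  hence \<open>A\<^sub>n\<^sub>+\<^sub>1 < A\<^sub>n + 3\<close>, which is \<open>C\<^sub>n < C\<^sub>n\<^sub>+\<^sub>1\<close>.\<close>

definition suffix_prod_sum :: "(nat \<Rightarrow> real) \<Rightarrow> nat \<Rightarrow> real" where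
  "suffix_prod_sum x j = (\<Sum>i=1..j. \<Prod>k=i..j. 1 / x k)"

lemma suffix_prod_sum_0 [simp]: "suffix_prod_sum x 0 = 0"
  by (simp add: suffix_prod_sum_def)

lemma suffix_prod_sum_Suc:
  "suffix_prod_sum x (Suc j) = (1 + suffix_prod_sum x j) / x (Suc j)"
proof -
  have "suffix_prod_sum x (Suc j) = (\<Sum>i=1..j. (\<Prod>k=i..j. 1 / x k) * (1 / x (Suc j))) + 1 / x (Suc j)"
    unfolding suffix_prod_sum_def by (simp add: sum.cl_ivl_Suc prod.cl_ivl_Suc)
  also have "\<dots> = (1 + suffix_prod_sum x j) / x (Suc j)"
    by (simp add: suffix_prod_sum_def sum_divide_distrib add_divide_distrib)
  finally show ?thesis .
qed

lemma f_fun_0 [simp]: "f_fun 0 x = 0"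
  by (simp add: f_fun_def)

lemma f_fun_Suc: "f_fun (Suc n) x = f_fun n x + x (Suc n) + suffix_prod_sum x (Suc n)"
  by (simp add: f_fun_def suffix_prod_sum_def sum.cl_ivl_Suc)

lemma suffix_prod_sum_nonneg:
  assumes "\<forall>k\<in>{1..n}. 0 < x k" "j \<le> n"
  shows "0 \<le> suffix_prod_sum x j"
  using assms(2)
proof (induction j)
  case (Suc j)
  then have "0 < x (Suc j)" using assms(1) by simp
  with Suc show ?case by (simp add: suffix_prod_sum_Suc)
qed simp

definition subst_domain :: "nat \<Rightarrow> (nat \<Rightarrow> real) set" where
  "subst_domain n = {b. b 0 = 0 \<and> (\<forall>k\<in>{1..n}. 0 < b k)}"

lemma subst_domain_nonneg:
  assumes "b \<in> subst_domain n" "j \<le> n"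
  shows "0 \<le> b j"
proof (cases "j = 0")
  case False
  then have "0 < b j" using assms by (simp add: subst_domain_def)
  then show ?thesis by simp
qed (use assms in \<open>simp add: subst_domain_def\<close>)

lemma subst_domain_Suc_subset: "subst_domain (Suc n) \<subseteq> subst_domain n"
  by (auto simp: subst_domain_def)

lemma suffix_prod_sum_in_subst_domain:
  assumes "\<forall>k\<in>{1..n}. 0 < x k"
  shows "suffix_prod_sum x \<in> subst_domain n"
proof -
  have "0 < suffix_prod_sum x k" if k: "k \<in> {1..n}" for k
  proof -
    obtain j where "k = Suc j" using k by (cases k) auto
    with k show ?thesis
      using suffix_prod_sum_nonneg[OF assms, of j] assms by (simp add: suffix_prod_sum_Suc)
  qed
  then show ?thesis by (simp add: subst_domain_def)
qed

fun f_subst :: "nat \<Rightarrow> (nat \<Rightarrow> real) \<Rightarrow> real" where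
  "f_subst 0 b = 0"
| "f_subst (Suc n) b = f_subst n b + b (Suc n) + (1 + b n) / b (Suc n)"

lemma f_subst_cong: "(\<And>j. j \<le> n \<Longrightarrow> b j = b' j) \<Longrightarrow> f_subst n b = f_subst n b'"
  by (induction n) auto

lemma f_fun_eq_f_subst:
  assumes "\<forall>k\<in>{1..n}. 0 < x k"
  shows "f_fun n x = f_subst n (suffix_prod_sum x)"
  using assms
proof (induction n)
  case (Suc n)
  have "0 \<le> suffix_prod_sum x n" "0 < x (Suc n)"
    using suffix_prod_sum_nonneg[OF Suc.prems, of n] Suc.prems by auto
  then have "(1 + suffix_prod_sum x n) / suffix_prod_sum x (Suc n) = x (Suc n)"
    by (simp add: suffix_prod_sum_Suc)
  with Suc show ?case by (simp add: f_fun_Suc)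
qed simp

lemma suffix_prod_sum_inverse:
  assumes "b \<in> subst_domain n" "j \<le> n"
  shows "suffix_prod_sum (\<lambda>k. (1 + b (k - 1)) / b k) j = b j"
  using assms(2)
proof (induction j)
  case 0
  then show ?case using assms(1) by (simp add: subst_domain_def)
next
  case (Suc j)
  have "0 < b (Suc j)" "0 \<le> b j"
    using assms(1) Suc.prems subst_domain_nonneg[OF assms(1), of j] by (auto simp: subst_domain_def)
  with Suc show ?case by (simp add: suffix_prod_sum_Suc)
qed

lemma f_fun_image_eq_f_subst_image:
  "f_fun n ` {x. \<forall>k\<in>{1..n}. 0 < x k} = f_subst n ` subst_domain n"
proof (intro equalityI image_subsetI)
  fix x :: "nat \<Rightarrow> real"
  assume "x \<in> {x. \<forall>k\<in>{1..n}. 0 < x k}"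
  then show "f_fun n x \<in> f_subst n ` subst_domain n"
    using f_fun_eq_f_subst suffix_prod_sum_in_subst_domain by auto
next
  fix b
  assume b: "b \<in> subst_domain n"
  define x where "x k = (1 + b (k - 1)) / b k" for k
  have x_pos: "\<forall>k\<in>{1..n}. 0 < x k"
  proof
    fix k assume "k \<in> {1..n}"
    then have "0 < b k" "0 \<le> b (k - 1)"
      using b subst_domain_nonneg[OF b, of "k - 1"] by (auto simp: subst_domain_def)
    then show "0 < x k" by (simp add: x_def)
  qed
  have "f_subst n b = f_fun n x"
    unfolding f_fun_eq_f_subst[OF x_pos] x_def
    by (intro f_subst_cong) (rule sym, rule suffix_prod_sum_inverse[OF b])
  with x_pos show "f_subst n b \<in> f_fun n ` {x. \<forall>k\<in>{1..n}. 0 < x k}" by auto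
qed

lemma A_val_eq_INF_f_subst: "A_val n = (INF b \<in> subst_domain n. f_subst n b)"
  unfolding A_val_def f_fun_image_eq_f_subst_image ..

lemma f_subst_mono:
  assumes "m \<le> n" "b \<in> subst_domain n"
  shows "f_subst m b \<le> f_subst n b"
  using assms
proof (induction n rule: dec_induct)
  case (step n)
  have "0 < b (Suc n)" "0 \<le> b n"
    using step.prems subst_domain_nonneg[OF step.prems] by (auto simp: subst_domain_def)
  then have "0 \<le> b (Suc n) + (1 + b n) / b (Suc n)" by simp
  moreover have "f_subst m b \<le> f_subst n b"
    using step subst_domain_Suc_subset by auto
  ultimately show ?case by simp
qed simp

lemma f_subst_nonneg: "b \<in> subst_domain n \<Longrightarrow> 0 \<le> f_subst n b"
  using f_subst_mono[of 0 n b] by simp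

lemma f_subst_coord_bounds:
  assumes b: "b \<in> subst_domain n" and j: "j \<in> {1..n}"
  shows "b j \<le> f_subst n b" "1 / b j \<le> f_subst n b"
proof -
  obtain i where i: "j = Suc i" using j by (cases j) auto
  have "0 < b j" "0 \<le> b i" "0 \<le> f_subst i b"
    using b j i subst_domain_nonneg[OF b, of i] f_subst_nonneg[of b i]
    by (auto simp: subst_domain_def)
  moreover have "1 / b j \<le> (1 + b i) / b j" "0 \<le> (1 + b i) / b j"
    using \<open>0 < b j\<close> \<open>0 \<le> b i\<close> by (simp_all add: divide_right_mono)
  moreover have "f_subst i b + b j + (1 + b i) / b j \<le> f_subst n b"
    using f_subst_mono[OF _ b, of j] j by (simp add: i)
  ultimately show "b j \<le> f_subst n b" "1 / b j \<le> f_subst n b"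
    by linarith+
qed

lemma continuous_on_coordinate [continuous_intros]:
  "continuous_on S (\<lambda>b :: 'a \<Rightarrow> 'b :: topological_space. b i)"
  by (rule continuous_on_product_then_coordinatewise[OF continuous_on_id])

lemma continuous_on_f_subst: "continuous_on {b. \<forall>k\<in>{1..n}. b k \<noteq> 0} (f_subst n)"
proof (induction n)
  case (Suc n)
  have "continuous_on {b. \<forall>k\<in>{1..Suc n}. b k \<noteq> 0} (f_subst n)"
    by (rule continuous_on_subset[OF Suc]) auto
  then show ?case
    by (simp only: f_subst.simps) (intro continuous_intros; auto)
qed simp


lemma compact_PiE_UNIV:
  fixes S :: "'a \<Rightarrow> 'b :: topological_space set"
  assumes "\<And>i. compact (S i)"
  shows "compact (PiE UNIV S)"
proof -
  have "compactin (product_topology (\<lambda>_. euclidean) UNIV) (PiE UNIV S)"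
    using assms by (simp add: compactin_PiE)
  then show ?thesis by (simp add: euclidean_product_topology)
qed

definition sublevel_box :: "nat \<Rightarrow> real \<Rightarrow> (nat \<Rightarrow> real) set" where
  "sublevel_box n M = PiE UNIV (\<lambda>k. if k \<in> {1..n} then {1 / M..M} else {0})"

lemma compact_sublevel_box: "compact (sublevel_box n M)"
  unfolding sublevel_box_def by (intro compact_PiE_UNIV) simp

lemma sublevel_box_subset_subst_domain:
  assumes "0 < M"
  shows "sublevel_box n M \<subseteq> subst_domain n"
proof
  fix b assume "b \<in> sublevel_box n M"
  then have b: "b k \<in> (if k \<in> {1..n} then {1 / M..M} else {0})" for k
    by (simp add: sublevel_box_def PiE_iff)
  have "0 < b k" if "k \<in> {1..n}" for k
  proof -
    have "1 / M \<le> b k" using b[of k] that by simp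
    moreover have "0 < 1 / M" using assms by simp
    ultimately show ?thesis by linarith
  qed
  with b[of 0] show "b \<in> subst_domain n" by (simp add: subst_domain_def)
qed

lemma truncation_in_sublevel_box:
  assumes b: "b \<in> subst_domain n" and M: "f_subst n b \<le> M"
  shows "(\<lambda>k. if k \<in> {1..n} then b k else 0) \<in> sublevel_box n M"
proof -
  have "b j \<in> {1 / M..M}" if j: "j \<in> {1..n}" for j
  proof -
    have "0 < b j" using b j by (simp add: subst_domain_def)
    have "b j \<le> M" "1 / b j \<le> M"
      using f_subst_coord_bounds[OF b j] M by auto
    moreover have "0 < M" using \<open>0 < b j\<close> \<open>b j \<le> M\<close> by linarith
    ultimately have "1 / M \<le> b j"
      using \<open>0 < b j\<close> by (simp add: field_simps)
    with \<open>b j \<le> M\<close> show ?thesis by simp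
  qed
  then show ?thesis by (simp add: sublevel_box_def PiE_iff)
qed

lemma f_subst_attains_min:
  obtains b where "b \<in> subst_domain n" "\<And>b'. b' \<in> subst_domain n \<Longrightarrow> f_subst n b \<le> f_subst n b'"
proof -
  define one :: "nat \<Rightarrow> real" where "one k = (if k = 0 then 0 else 1)" for k
  define M where "M = max 1 (f_subst n one)"
  define trunc where "trunc b k = (if k \<in> {1..n} then b k else 0)" for b :: "nat \<Rightarrow> real" and k
  have one: "one \<in> subst_domain n" by (simp add: one_def subst_domain_def)
  have box_subset: "sublevel_box n M \<subseteq> subst_domain n"
    by (rule sublevel_box_subset_subst_domain) (simp add: M_def)
  have f_trunc: "f_subst n (trunc b) = f_subst n b" if "b \<in> subst_domain n" for b
    using that by (intro f_subst_cong) (auto simp: trunc_def subst_domain_def Suc_le_eq)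
  have trunc_in_box: "trunc b \<in> sublevel_box n M" if "b \<in> subst_domain n" "f_subst n b \<le> M" for b
    unfolding trunc_def using that by (rule truncation_in_sublevel_box)
  have one_in_box: "trunc one \<in> sublevel_box n M"
    using trunc_in_box[OF one] by (simp add: M_def)
  have "subst_domain n \<subseteq> {b. \<forall>k\<in>{1..n}. b k \<noteq> 0}"
    by (auto simp: subst_domain_def)
  then have "continuous_on (sublevel_box n M) (f_subst n)"
    using continuous_on_subset[OF continuous_on_f_subst] box_subset by blast
  then obtain c where c: "c \<in> sublevel_box n M"
    "\<And>y. y \<in> sublevel_box n M \<Longrightarrow> f_subst n c \<le> f_subst n y"
    using continuous_attains_inf[OF compact_sublevel_box] one_in_box by (metis empty_iff)
  have "f_subst n c \<le> f_subst n b" if b: "b \<in> subst_domain n" for b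
  proof (cases "f_subst n b \<le> M")
    case True
    then show ?thesis using c(2)[OF trunc_in_box[OF b True]] f_trunc[OF b] by simp
  next
    case False
    have "f_subst n c \<le> f_subst n one"
      using c(2)[OF one_in_box] f_trunc[OF one] by simp
    with False show ?thesis by (simp add: M_def)
  qed
  with c(1) box_subset that show ?thesis by blast
qed

definition insert_at :: "nat \<Rightarrow> 'a \<Rightarrow> (nat \<Rightarrow> 'a) \<Rightarrow> nat \<Rightarrow> 'a" where
  "insert_at k s b j = (if j < k then b j else if j = k then s else b (j - 1))"

lemma insert_at_in_subst_domain:
  assumes "b \<in> subst_domain n" "k \<in> {1..Suc n}" "0 < s"
  shows "insert_at k s b \<in> subst_domain (Suc n)"
proof -
  have "0 < insert_at k s b j" if j: "j \<in> {1..Suc n}" for j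
  proof -
    consider "j < k" | "j = k" | "k < j" by linarith
    then show ?thesis
    proof cases
      case 1
      then have "j \<in> {1..n}" using j assms(2) by auto
      with 1 assms(1) show ?thesis by (simp add: insert_at_def subst_domain_def)
    next
      case 3
      then have "j - 1 \<in> {1..n}" using j assms(2) by auto
      with 3 assms(1) show ?thesis by (simp add: insert_at_def subst_domain_def)
    qed (simp add: insert_at_def assms(3))
  qed
  moreover have "insert_at k s b 0 = 0"
    using assms(1,2) by (simp add: insert_at_def subst_domain_def)
  ultimately show ?thesis by (simp add: subst_domain_def)
qed

lemma f_subst_insert_at_last:
  "f_subst (Suc n) (insert_at (Suc n) s b) = f_subst n b + s + (1 + b n) / s"
proof -
  have "f_subst n (insert_at (Suc n) s b) = f_subst n b"
    by (intro f_subst_cong) (auto simp: insert_at_def)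
  then show ?thesis by (simp add: insert_at_def)
qed

lemma f_subst_insert_at:
  assumes "1 \<le> k" "k \<le> n"
  shows "f_subst (Suc n) (insert_at k s b)
    = f_subst n b + s + (1 + b (k - 1)) / s + (s - b (k - 1)) / b k"
  using assms(2)
proof (induction n rule: dec_induct)
  case base
  obtain i where i: "k = Suc i" using assms(1) by (cases k) auto
  have "f_subst i (insert_at k s b) = f_subst i b"
    by (intro f_subst_cong) (auto simp: insert_at_def i)
  moreover have "insert_at k s b i = b i" "insert_at k s b k = s" "insert_at k s b (Suc k) = b k"
    by (simp_all add: insert_at_def i)
  moreover have "(1 + s) / b k = (1 + b i) / b k + (s - b i) / b k"
    by (simp add: diff_divide_distrib add_divide_distrib)
  ultimately show ?case by (simp add: i)
next
  case (step m)
  then have "insert_at k s b (Suc (Suc m)) = b (Suc m)" "insert_at k s b (Suc m) = b m"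
    by (auto simp: insert_at_def)
  with step show ?case by simp
qed

lemma exists_crossing_index:
  fixes b :: "nat \<Rightarrow> real"
  assumes "b 0 < 1"
  shows "\<exists>k\<in>{1..Suc n}. b (k - 1) < 1 \<and> (k \<le> n \<longrightarrow> 1 \<le> b k)"
proof (induction n)
  case 0
  then show ?case using assms by auto
next
  case (Suc n)
  then obtain k where k: "k \<in> {1..Suc n}" "b (k - 1) < 1" "k \<le> n \<longrightarrow> 1 \<le> b k"
    by blast
  show ?case
  proof (cases "k \<le> n \<or> 1 \<le> b (Suc n)")
    case True
    with k show ?thesis by (intro bexI[of _ k]) (auto simp: le_Suc_eq)
  next
    case False
    with k show ?thesis by (intro bexI[of _ "Suc (Suc n)"]) auto
  qed
qed

lemma insertion_increment_lt_3:
  fixes u :: real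
  assumes "0 \<le> u" "u < 1"
  shows "(3 + u) / 4 + (1 + u) / ((3 + u) / 4) + ((3 + u) / 4 - u) < 3"
proof -
  have "0 < 3 + u" using assms by simp
  have "0 < (1 - u)\<^sup>2" using assms by simp
  then have "8 * (1 + u) < (3 + u) * (3 + u)"
    by (simp add: power2_eq_square algebra_simps)
  then have "4 * (1 + u) / (3 + u) < (3 + u) / 2"
    using \<open>0 < 3 + u\<close> by (simp add: field_simps)
  moreover have "(1 + u) / ((3 + u) / 4) = 4 * (1 + u) / (3 + u)" by simp
  moreover have "(3 + u) / 4 + ((3 + u) / 4 - u) = 3 - (3 + u) / 2" by (simp add: field_simps)
  ultimately show ?thesis by argo
qed

lemma f_subst_Suc_lt_add_3:
  assumes b: "b \<in> subst_domain n"
  obtains b' where "b' \<in> subst_domain (Suc n)" "f_subst (Suc n) b' < f_subst n b + 3"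
proof -
  have "b 0 < 1" using b by (simp add: subst_domain_def)
  then obtain k where k: "k \<in> {1..Suc n}" "b (k - 1) < 1" "k \<le> n \<longrightarrow> 1 \<le> b k"
    using exists_crossing_index by blast
  define u where "u = b (k - 1)"
  define s where "s = (3 + u) / 4"
  have "0 \<le> u" "u < 1"
    using subst_domain_nonneg[OF b, of "k - 1"] k by (auto simp: u_def)
  then have "0 < s" "u \<le> s" by (simp_all add: s_def)
  have "f_subst (Suc n) (insert_at k s b) \<le> f_subst n b + s + (1 + u) / s + (s - u)"
  proof (cases "k \<le> n")
    case True
    then have "(s - u) / b k \<le> s - u"
      using k \<open>u \<le> s\<close> by (simp add: divide_le_eq mult_le_cancel_left1)
    moreover have "f_subst (Suc n) (insert_at k s b) = f_subst n b + s + (1 + u) / s + (s - u) / b k"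
      unfolding u_def using k(1) True by (intro f_subst_insert_at) auto
    ultimately show ?thesis by linarith
  next
    case False
    then have "k = Suc n" using k by simp
    then have "f_subst (Suc n) (insert_at k s b) = f_subst n b + s + (1 + u) / s"
      unfolding u_def by (simp only: diff_Suc_1 f_subst_insert_at_last)
    with \<open>u \<le> s\<close> show ?thesis by linarith
  qed
  also have "\<dots> < f_subst n b + 3"
    using insertion_increment_lt_3[OF \<open>0 \<le> u\<close> \<open>u < 1\<close>] by (simp add: s_def)
  finally show ?thesis
    using that insert_at_in_subst_domain[OF b k(1) \<open>0 < s\<close>] by blast
qed

lemma A_val_Suc_lt_add_3: "A_val (Suc n) < A_val n + 3"
proof -
  obtain b where b: "b \<in> subst_domain n"
    and b_min: "\<And>b'. b' \<in> subst_domain n \<Longrightarrow> f_subst n b \<le> f_subst n b'"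
    using f_subst_attains_min by blast
  obtain b' where b': "b' \<in> subst_domain (Suc n)" "f_subst (Suc n) b' < f_subst n b + 3"
    using f_subst_Suc_lt_add_3[OF b] .
  have "A_val n = f_subst n b"
    unfolding A_val_eq_INF_f_subst using b b_min by (intro cInf_eq_minimum) auto
  moreover have "A_val (Suc n) \<le> f_subst (Suc n) b'"
    unfolding A_val_eq_INF_f_subst
    by (rule cINF_lower[OF bdd_belowI2 b'(1)]) (rule f_subst_nonneg)
  ultimately show ?thesis using b'(2) by linarith
qed

theorem proposition1:
  shows "\<forall>n\<ge>1. C_val n < C_val (Suc n)"
proof (intro allI impI)
  fix n :: nat
  show "C_val n < C_val (Suc n)"
    using A_val_Suc_lt_add_3[of n] by (simp add: C_val_def)
qed

end
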